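(* Let $n\ge 2$. For $0\le k\le n-2$, $$a(n,k)={\left[ n \atop n-k\right]}_2 .$$
   Context: $A_n$ is the alternating group on $\{1,\dots,n\}$, $T(A_n)=\{(1\,2)(i\,j)\mid 1\le i<j\le n\}$, $\ell_{T(A_n)}(v)=\min\{r\ge 0\mid v=t_1\cdots t_r,\ t_i\in T(A_n)\}$, and $a(n,k)$ is the number of $v\in A_n$ with $\ell_{T(A_n)}(v)=k$. The 2-restricted unsigned Stirling number of the first kind ${\left[ n \atop j\right]}_2$ is the number of permutations of $\{1,\dots,n\}$ with exactly $j$ cycles (fixed points counted) in which $1$ and $2$ lie in distinct cycles. *)

theory Defs
  imports "HOL-Combinatorics.Combinatorics"
begin

definition alt_group_set :: "nat \<Rightarrow> (nat \<Rightarrow> nat) set" where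
  "alt_group_set n = {p. p permutes {1..n} \<and> evenperm p}"

definition T_alt :: "nat \<Rightarrow> (nat \<Rightarrow> nat) set" where
  "T_alt n = {transpose 1 2 \<circ> transpose i j | i j. 1 \<le> i \<and> i < j \<and> j \<le> n}"

definition len_T :: "nat \<Rightarrow> (nat \<Rightarrow> nat) \<Rightarrow> nat" where
  "len_T n v = (LEAST r. \<exists>ts. length ts = r \<and> set ts \<subseteq> T_alt n \<and> v = foldr (\<circ>) ts id)"

definition a_count :: "nat \<Rightarrow> nat \<Rightarrow> nat" where
  "a_count n k = card {v \<in> alt_group_set n. len_T n v = k}"

definition cycle_of :: "(nat \<Rightarrow> nat) \<Rightarrow> nat \<Rightarrow> nat set" where
  "cycle_of p x = {y. \<exists>m. (p ^^ m) x = y}"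

definition num_cycles :: "nat \<Rightarrow> (nat \<Rightarrow> nat) \<Rightarrow> nat" where
  "num_cycles n p = card (cycle_of p ` {1..n})"

definition stirling1_2 :: "nat \<Rightarrow> nat \<Rightarrow> nat" where
  "stirling1_2 n j = card {p. p permutes {1..n} \<and> num_cycles n p = j \<and>
                               cycle_of p 1 \<noteq> cycle_of p 2}"

end

theory Submission
  imports Defs
begin

text \<open>Left multiplication by a transposition \<open>(a b)\<close> changes the number of cycles of a
permutation by exactly one: it merges the cycles of \<open>a\<close> and \<open>b\<close> if they differ and splits
their common cycle otherwise. Write \<open>c*(v) = max (c v) (c ((1 2) v))\<close>. Since
\<open>(1 2)(a b) = (\<sigma>a \<sigma>b)(1 2)\<close> with \<open>\<sigma> = (1 2)\<close>, left multiplication by an element of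
\<open>T(A\<^sub>n)\<close> changes \<open>c*\<close> by at most one, and as long as \<open>c* < n\<close> it can be raised by one by
splitting a cycle of whichever of \<open>v\<close>, \<open>(1 2) v\<close> attains the maximum. Hence
\<open>\<ell>\<^sub>T(v) = n - c*(v)\<close> on \<open>A\<^sub>n\<close>. Finally \<open>c*\<close> is constant on the pairs \<open>{v, (1 2) v}\<close>; exactly
one member of each pair is even, and exactly one separates \<open>1\<close> and \<open>2\<close>, where \<open>c*\<close> is its
number of cycles. So both sides count transversals of the same pairs.\<close>

lemma cycle_of_self: "x \<in> cycle_of p x"
  unfolding cycle_of_def by (auto intro: exI[of _ 0])

lemma cycle_of_closed: "y \<in> cycle_of p x \<Longrightarrow> p y \<in> cycle_of p x"
  unfolding cycle_of_def by (auto intro: exI[of _ "Suc m" for m])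

lemma cycle_of_subsetI:
  assumes "x \<in> A" and "\<And>y. y \<in> A \<Longrightarrow> p y \<in> A"
  shows "cycle_of p x \<subseteq> A"
proof
  fix z assume "z \<in> cycle_of p x"
  then obtain m where "z = (p ^^ m) x" unfolding cycle_of_def by auto
  moreover have "(p ^^ m) x \<in> A" by (induction m) (use assms in auto)
  ultimately show "z \<in> A" by simp
qed

lemma cycle_of_subset_cycle_of: "y \<in> cycle_of p x \<Longrightarrow> cycle_of p y \<subseteq> cycle_of p x"
  by (rule cycle_of_subsetI) (auto intro: cycle_of_closed)

lemma cycle_of_eq_orbit: "permutation p \<Longrightarrow> cycle_of p x = orbit p x"
  unfolding cycle_of_def by (auto simp: orbit_altdef_permutation)

lemma cycle_of_sym: "permutation p \<Longrightarrow> y \<in> cycle_of p x \<Longrightarrow> x \<in> cycle_of p y"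
  using orbit_swap permutation_self_in_orbit cycle_of_eq_orbit by metis

lemma cycle_of_eq: "permutation p \<Longrightarrow> y \<in> cycle_of p x \<Longrightarrow> cycle_of p y = cycle_of p x"
  by (meson cycle_of_sym cycle_of_subset_cycle_of subset_antisym)

lemma cycle_of_eq_iff: "permutation p \<Longrightarrow> cycle_of p x = cycle_of p y \<longleftrightarrow> y \<in> cycle_of p x"
  using cycle_of_eq cycle_of_self by metis

lemma cycle_of_id: "cycle_of id x = {x}"
  unfolding cycle_of_def by auto

lemma cycle_of_subset_cycle_of_transpose_comp:
  assumes "b \<notin> cycle_of w a"
  shows "cycle_of w a \<subseteq> cycle_of (transpose a b \<circ> w) a"
proof -
  let ?C = "cycle_of (transpose a b \<circ> w) a"
  have "cycle_of w a \<subseteq> cycle_of w a \<inter> ?C"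
  proof (rule cycle_of_subsetI)
    show "a \<in> cycle_of w a \<inter> ?C" by (simp add: cycle_of_self)
    fix y assume y: "y \<in> cycle_of w a \<inter> ?C"
    then have wy: "w y \<in> cycle_of w a" by (simp add: cycle_of_closed)
    with assms have "w y \<noteq> b" by auto
    moreover have "transpose a b (w y) \<in> ?C"
      using y cycle_of_closed[of y "transpose a b \<circ> w" a] by simp
    ultimately have "w y \<in> ?C"
      using cycle_of_self[of a] by (cases "w y = a") auto
    with wy show "w y \<in> cycle_of w a \<inter> ?C" by blast
  qed
  then show ?thesis by blast
qed

lemma cycle_of_transpose_comp_merge:
  assumes w: "permutation w" and b: "b \<notin> cycle_of w a"
  shows "cycle_of (transpose a b \<circ> w) a = cycle_of w a \<union> cycle_of w b"
proof
  let ?w' = "transpose a b \<circ> w"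
  have "inv w a \<in> cycle_of w a"
    using orbit.base[of "inv w" a] orbit_inv_eq[OF w] cycle_of_eq_orbit[OF w] by simp
  moreover have "w (inv w a) = a"
    using w by (meson bij_inv_eq_iff permutation_bijective)
  ultimately have "b \<in> cycle_of ?w' a"
    using cycle_of_closed[of "inv w a" ?w' a] cycle_of_subset_cycle_of_transpose_comp[OF b] by auto
  moreover have "a \<notin> cycle_of w b" using w b cycle_of_sym by blast
  then have "cycle_of w b \<subseteq> cycle_of ?w' b"
    using cycle_of_subset_cycle_of_transpose_comp[of a w b] by (simp add: transpose_commute)
  ultimately show "cycle_of w a \<union> cycle_of w b \<subseteq> cycle_of ?w' a"
    using cycle_of_subset_cycle_of cycle_of_subset_cycle_of_transpose_comp[OF b] by blast
  show "cycle_of ?w' a \<subseteq> cycle_of w a \<union> cycle_of w b"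
    by (rule cycle_of_subsetI) (auto simp: cycle_of_self cycle_of_closed transpose_def)
qed

lemma cycle_of_transpose_comp_disjoint:
  assumes "a \<notin> cycle_of w x" and "b \<notin> cycle_of w x"
  shows "cycle_of (transpose a b \<circ> w) x = cycle_of w x"
proof -
  have "((transpose a b \<circ> w) ^^ m) x = (w ^^ m) x" for m
  proof (induction m)
    case (Suc m)
    have "(w ^^ Suc m) x \<in> cycle_of w x" unfolding cycle_of_def by blast
    with assms Suc show ?case by (auto simp: transpose_def)
  qed simp
  then show ?thesis unfolding cycle_of_def by simp
qed

lemma transpose_comp_separates:
  assumes ab: "a \<noteq> b" and b: "b \<in> cycle_of w a"
  shows "b \<notin> cycle_of (transpose a b \<circ> w) a"
proof -
  define k where "k = funpow_dist w a b"
  obtain m where m: "(w ^^ m) a = b" using b unfolding cycle_of_def by auto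
  with ab have "0 < m" by (cases m) auto
  with m have "b \<in> orbit w a" unfolding orbit_altdef by blast
  then have k: "(w ^^ k) a = b" unfolding k_def by (rule funpow_dist_prop)
  with ab have "0 < k" by (cases k) auto
  have not_a: "(w ^^ j) a \<noteq> a" if "0 < j" "j \<le> k" for j
    using funpow_neq_less_funpow_dist[OF \<open>b \<in> orbit w a\<close>, of j 0] that by (simp add: k_def)
  have not_b: "(w ^^ j) a \<noteq> b" if "j < k" for j
    using funpow_dist_least that by (simp add: k_def)
  \<comment> \<open>the \<open>w\<close>-path from \<open>a\<close> to \<open>b\<close>; \<open>(a b) \<circ> w\<close> closes it into a cycle avoiding \<open>b\<close>\<close>
  define P where "P = (\<lambda>j. (w ^^ j) a) ` {..<k}"
  have "cycle_of (transpose a b \<circ> w) a \<subseteq> P"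
  proof (rule cycle_of_subsetI)
    show "a \<in> P" unfolding P_def using \<open>0 < k\<close> by (auto intro: image_eqI[of _ _ 0])
    fix y assume "y \<in> P"
    then obtain j where j: "j < k" "y = (w ^^ j) a" unfolding P_def by auto
    show "(transpose a b \<circ> w) y \<in> P"
    proof (cases "Suc j < k")
      case True
      then have "(transpose a b \<circ> w) y = (w ^^ Suc j) a"
        using j not_a[of "Suc j"] not_b[of "Suc j"] by simp
      with True show ?thesis unfolding P_def by blast
    next
      case False
      with j k have "w y = b" by (metis Suc_lessI comp_apply funpow.simps(2))
      with \<open>a \<in> P\<close> show ?thesis by simp
    qed
  qed
  moreover have "b \<notin> P" unfolding P_def using not_b by auto
  ultimately show ?thesis by blast
qed

lemma cycle_of_transpose_comp_iff:
  assumes "permutation w" and "a \<noteq> b"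
  shows "b \<in> cycle_of (transpose a b \<circ> w) a \<longleftrightarrow> b \<notin> cycle_of w a"
  using transpose_comp_separates[OF assms(2)] cycle_of_transpose_comp_merge[OF assms(1)]
    cycle_of_self by blast

lemma card_cycles_transpose_comp_merge:
  assumes S: "finite S" and w: "w permutes S" and ab: "a \<in> S" "b \<in> S"
    and b: "b \<notin> cycle_of w a"
  shows "card (cycle_of w ` S) = card (cycle_of (transpose a b \<circ> w) ` S) + 1"
proof -
  define w' where "w' = transpose a b \<circ> w"
  define U where "U = cycle_of w a \<union> cycle_of w b"
  define R where "R = cycle_of w ` (S - U)"
  have pw: "permutation w" using S w permutation_permutes by blast
  have pw': "permutation w'"
    unfolding w'_def using pw by (simp add: permutation_compose permutation_swap_id)
  have "cycle_of w a \<noteq> cycle_of w b" using b cycle_of_self by metis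
  moreover have notR: "C \<notin> R" if "C \<subseteq> U" for C
    using that cycle_of_self unfolding R_def by blast
  moreover have "cycle_of w ` S = insert (cycle_of w a) (insert (cycle_of w b) R)"
  proof -
    have "cycle_of w x \<in> insert (cycle_of w a) (insert (cycle_of w b) R)" if "x \<in> S" for x
      using that cycle_of_eq[OF pw, of x a] cycle_of_eq[OF pw, of x b]
      unfolding R_def U_def by blast
    then show ?thesis using ab unfolding R_def by blast
  qed
  moreover have "cycle_of w' ` S = insert U R"
  proof -
    have inside: "cycle_of w' x = U" if "x \<in> U" for x
      using that cycle_of_eq[OF pw'] cycle_of_transpose_comp_merge[OF pw b]
      unfolding U_def w'_def by blast
    have outside: "cycle_of w' x = cycle_of w x" if "x \<notin> U" for x
      using that cycle_of_sym[OF pw] cycle_of_transpose_comp_disjoint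
      unfolding U_def w'_def by blast
    have "cycle_of w' x \<in> insert U R" if "x \<in> S" for x
      using that inside outside unfolding R_def by (cases "x \<in> U") auto
    moreover have "U = cycle_of w' a" using inside cycle_of_self unfolding U_def by blast
    moreover have "R \<subseteq> cycle_of w' ` S" unfolding R_def by (auto simp: outside[symmetric])
    ultimately show ?thesis using ab by blast
  qed
  moreover have "finite R" unfolding R_def using S by simp
  ultimately show ?thesis unfolding w'_def
    by (simp add: U_def)
qed

lemma card_cycles_transpose_comp_split:
  assumes "finite S" and "w permutes S" and "a \<in> S" "b \<in> S" "a \<noteq> b"
    and "b \<in> cycle_of w a"
  shows "card (cycle_of (transpose a b \<circ> w) ` S) = card (cycle_of w ` S) + 1"
proof -
  have "transpose a b \<circ> w permutes S"
    using assms by (simp add: permutes_compose permutes_swap_id)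
  moreover have "transpose a b \<circ> (transpose a b \<circ> w) = w" by (simp add: comp_assoc[symmetric])
  ultimately show ?thesis
    using card_cycles_transpose_comp_merge[of S "transpose a b \<circ> w" a b]
      transpose_comp_separates assms by simp
qed

lemma num_cycles_le: "num_cycles n p \<le> n"
  unfolding num_cycles_def by (metis card_atLeastAtMost card_image_le diff_Suc_1 finite_atLeastAtMost)

lemma num_cycles_id: "num_cycles n id = n"
proof -
  have "cycle_of id ` {1..n} = (\<lambda>x. {x}) ` {1..n}" by (simp add: cycle_of_id)
  moreover have "card ((\<lambda>x. {x}) ` {1..n}) = n" by (subst card_image) auto
  ultimately show ?thesis unfolding num_cycles_def by simp
qed

lemma num_cycles_transpose_comp_split:
  assumes "p permutes {1..n}" "a \<in> {1..n}" "b \<in> {1..n}" "a \<noteq> b" "b \<in> cycle_of p a"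
  shows "num_cycles n (transpose a b \<circ> p) = num_cycles n p + 1"
  using card_cycles_transpose_comp_split[OF _ assms] unfolding num_cycles_def by simp

lemma num_cycles_transpose_comp_merge:
  assumes "p permutes {1..n}" "a \<in> {1..n}" "b \<in> {1..n}" "b \<notin> cycle_of p a"
  shows "num_cycles n p = num_cycles n (transpose a b \<circ> p) + 1"
  using card_cycles_transpose_comp_merge[OF _ assms] unfolding num_cycles_def by simp

lemma num_cycles_transpose_comp_bounds:
  assumes "p permutes {1..n}" "a \<in> {1..n}" "b \<in> {1..n}" "a \<noteq> b"
  shows "num_cycles n p \<le> num_cycles n (transpose a b \<circ> p) + 1"
    and "num_cycles n (transpose a b \<circ> p) \<le> num_cycles n p + 1"
proof -
  have "num_cycles n (transpose a b \<circ> p) = num_cycles n p + 1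
        \<or> num_cycles n p = num_cycles n (transpose a b \<circ> p) + 1"
    using num_cycles_transpose_comp_split[OF assms] num_cycles_transpose_comp_merge[OF assms(1-3)]
    by (cases "b \<in> cycle_of p a") simp_all
  then show "num_cycles n p \<le> num_cycles n (transpose a b \<circ> p) + 1"
    and "num_cycles n (transpose a b \<circ> p) \<le> num_cycles n p + 1"
    by auto
qed

lemma obtain_splitting_transposition:
  assumes p: "p permutes {1..n}" and "p \<noteq> id"
  obtains a b where "a \<in> {1..n}" "b \<in> {1..n}" "a \<noteq> b"
    and "num_cycles n (transpose a b \<circ> p) = num_cycles n p + 1"
proof -
  obtain a where a: "p a \<noteq> a" using \<open>p \<noteq> id\<close> by (auto simp: fun_eq_iff)
  then have "a \<in> {1..n}" using p by (meson permutes_not_in)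
  moreover have "p a \<in> {1..n}" using permutes_in_image[OF p] calculation by blast
  moreover have "p a \<in> cycle_of p a" by (rule cycle_of_closed[OF cycle_of_self])
  ultimately show ?thesis using that a num_cycles_transpose_comp_split[OF p] by metis
qed

lemma num_cycles_eq_n_iff:
  assumes "p permutes {1..n}"
  shows "num_cycles n p = n \<longleftrightarrow> p = id"
proof
  assume "num_cycles n p = n"
  show "p = id"
  proof (rule ccontr)
    assume "p \<noteq> id"
    with assms obtain a b where "num_cycles n (transpose a b \<circ> p) = num_cycles n p + 1"
      by (rule obtain_splitting_transposition)
    then show False using \<open>num_cycles n p = n\<close> num_cycles_le[of n "transpose a b \<circ> p"] by simp
  qed
qed (simp add: num_cycles_id)

definition max_num_cycles :: "nat \<Rightarrow> (nat \<Rightarrow> nat) \<Rightarrow> nat" where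
  "max_num_cycles n v = max (num_cycles n v) (num_cycles n (transpose 1 2 \<circ> v))"

lemma transpose_comp_cancel [simp]: "transpose a b \<circ> (transpose a b \<circ> p) = p"
  by (rule ext) simp

lemma transpose_12_permutes: "n \<ge> 2 \<Longrightarrow> transpose 1 2 permutes {1..(n::nat)}"
  by (rule permutes_swap_id) auto

lemma max_num_cycles_transpose_12_comp:
  "max_num_cycles n (transpose 1 2 \<circ> p) = max_num_cycles n p"
  unfolding max_num_cycles_def by (simp add: max.commute)

lemma max_num_cycles_le: "max_num_cycles n p \<le> n"
  unfolding max_num_cycles_def using num_cycles_le by simp

lemma max_num_cycles_id: "max_num_cycles n id = n"
  unfolding max_num_cycles_def using num_cycles_id num_cycles_le by (simp add: max_absorb1)

lemma max_num_cycles_separated: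
  assumes "n \<ge> 2" "p permutes {1..n}" "2 \<notin> cycle_of p 1"
  shows "max_num_cycles n p = num_cycles n p"
  using num_cycles_transpose_comp_merge[OF assms(2) _ _ assms(3)] assms(1)
  unfolding max_num_cycles_def by simp

lemma even_max_num_cycles_eq_n_imp_id:
  assumes n: "n \<ge> 2" and p: "p permutes {1..n}" and "evenperm p" and "max_num_cycles n p = n"
  shows "p = id"
proof -
  have "transpose 1 2 \<circ> p \<noteq> id"
  proof
    assume "transpose 1 2 \<circ> p = id"
    then have "p = transpose 1 2" by (metis transpose_comp_cancel comp_id)
    with \<open>evenperm p\<close> show False by (simp add: evenperm_swap)
  qed
  then have "num_cycles n (transpose 1 2 \<circ> p) \<noteq> n"
    using num_cycles_eq_n_iff permutes_compose[OF p transpose_12_permutes[OF n]] by blast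
  then have "num_cycles n p = n"
    using assms(4) unfolding max_num_cycles_def by (metis max_def)
  then show ?thesis using num_cycles_eq_n_iff[OF p] by blast
qed

lemma transpose_12_comp_transpose:
  "transpose 1 2 \<circ> transpose a b
     = transpose (transpose 1 2 a) (transpose 1 2 b) \<circ> transpose (1::nat) 2"
  by (rule ext) (auto simp: transpose_def)

lemma T_alt_memI:
  assumes "a \<in> {1..n}" "b \<in> {1..n}" "a \<noteq> b"
  shows "transpose 1 2 \<circ> transpose a b \<in> T_alt n"
    and "transpose a b \<circ> transpose 1 2 \<in> T_alt n"
proof -
  have T: "transpose 1 2 \<circ> transpose x y \<in> T_alt n"
    if "x \<in> {1..n}" "y \<in> {1..n}" "x \<noteq> y" for x y
  proof (cases "x < y")
    case True then show ?thesis using that unfolding T_alt_def by auto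
  next
    case False
    with that have "1 \<le> y" "y < x" "x \<le> n" by auto
    then have "transpose 1 2 \<circ> transpose y x \<in> T_alt n" unfolding T_alt_def by auto
    then show ?thesis by (simp add: transpose_commute)
  qed
  show "transpose 1 2 \<circ> transpose a b \<in> T_alt n" using T assms .
  have "transpose 1 2 a \<in> {1..n}" "transpose 1 2 b \<in> {1..n}" "transpose 1 2 a \<noteq> transpose 1 2 b"
    using assms by (auto simp: transpose_def)
  from T[OF this] show "transpose a b \<circ> transpose 1 2 \<in> T_alt n"
    using transpose_12_comp_transpose[of "transpose 1 2 a" "transpose 1 2 b"] by simp
qed

lemma T_alt_cases:
  assumes "t \<in> T_alt n"
  obtains a b where "a \<in> {1..n}" "b \<in> {1..n}" "a \<noteq> b" "t = transpose 1 2 \<circ> transpose a b"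
proof -
  from assms obtain i j where "t = transpose 1 2 \<circ> transpose i j" "1 \<le> i" "i < j" "j \<le> n"
    unfolding T_alt_def by blast
  then show ?thesis using that[of i j] by simp
qed

lemma T_alt_permutes:
  assumes "t \<in> T_alt n"
  shows "t permutes {1..n}"
proof -
  obtain a b where ab: "a \<in> {1..n}" "b \<in> {1..n}" "a \<noteq> b" "t = transpose 1 2 \<circ> transpose a b"
    using assms by (rule T_alt_cases)
  then have "n \<ge> 2" by auto
  with ab show ?thesis
    by (simp add: permutes_compose permutes_swap_id transpose_12_permutes)
qed

lemma T_alt_evenperm: "t \<in> T_alt n \<Longrightarrow> evenperm t"
  by (erule T_alt_cases) (simp add: evenperm_comp evenperm_swap permutation_swap_id)

lemma T_alt_inverse:
  assumes "t \<in> T_alt n"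
  obtains t' where "t' \<in> T_alt n" "t' \<circ> t = id"
proof -
  obtain a b where ab: "a \<in> {1..n}" "b \<in> {1..n}" "a \<noteq> b" "t = transpose 1 2 \<circ> transpose a b"
    using assms by (rule T_alt_cases)
  then have "(transpose a b \<circ> transpose 1 2) \<circ> t = id" by (simp add: comp_assoc)
  with T_alt_memI(2)[OF ab(1-3)] show ?thesis using that by blast
qed

lemma max_num_cycles_T_alt_comp:
  assumes v: "v permutes {1..n}" and t: "t \<in> T_alt n"
  shows "max_num_cycles n v \<le> max_num_cycles n (t \<circ> v) + 1"
    and "max_num_cycles n (t \<circ> v) \<le> max_num_cycles n v + 1"
proof -
  obtain a b where ab: "a \<in> {1..n}" "b \<in> {1..n}" "a \<noteq> b" "t = transpose 1 2 \<circ> transpose a b"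
    using t by (rule T_alt_cases)
  define a' b' where "a' = transpose 1 2 a" and "b' = transpose 1 2 b"
  have ab': "a' \<in> {1..n}" "b' \<in> {1..n}" "a' \<noteq> b'"
    using ab by (auto simp: a'_def b'_def transpose_def)
  have "n \<ge> 2" using ab by auto
  then have v': "transpose 1 2 \<circ> v permutes {1..n}"
    by (rule permutes_compose[OF v transpose_12_permutes])
  have "transpose 1 2 \<circ> (t \<circ> v) = transpose a b \<circ> v"
    using ab(4) by (simp add: comp_assoc)
  moreover have "t \<circ> v = transpose a' b' \<circ> (transpose 1 2 \<circ> v)"
    using ab(4) unfolding a'_def b'_def transpose_12_comp_transpose by (simp add: comp_assoc)
  moreover note num_cycles_transpose_comp_bounds[OF v ab(1-3)]
    num_cycles_transpose_comp_bounds[OF v' ab']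
  ultimately show "max_num_cycles n v \<le> max_num_cycles n (t \<circ> v) + 1"
    and "max_num_cycles n (t \<circ> v) \<le> max_num_cycles n v + 1"
    unfolding max_num_cycles_def by (auto simp: max_def)
qed

lemma exists_T_alt_max_num_cycles_Suc:
  assumes n: "n \<ge> 2" and v: "v permutes {1..n}" and less: "max_num_cycles n v < n"
  shows "\<exists>t \<in> T_alt n. max_num_cycles n (t \<circ> v) = max_num_cycles n v + 1"
proof -
  obtain w where w: "w = v \<or> w = transpose 1 2 \<circ> v" "num_cycles n w = max_num_cycles n v"
    unfolding max_num_cycles_def by (metis max_def)
  have "w permutes {1..n}"
    using w(1) v permutes_compose[OF v transpose_12_permutes[OF n]] by auto
  moreover have "w \<noteq> id" using w(2) less num_cycles_id by auto
  ultimately obtain a b where ab: "a \<in> {1..n}" "b \<in> {1..n}" "a \<noteq> b"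
    and split: "num_cycles n (transpose a b \<circ> w) = num_cycles n w + 1"
    by (rule obtain_splitting_transposition)
  obtain t where t: "t \<in> T_alt n"
    and "transpose a b \<circ> w = t \<circ> v \<or> transpose a b \<circ> w = transpose 1 2 \<circ> (t \<circ> v)"
  proof (cases "w = v")
    case True
    then show ?thesis using that[OF T_alt_memI(1)[OF ab]] by (simp add: comp_assoc)
  next
    case False
    then show ?thesis using that[OF T_alt_memI(2)[OF ab]] w(1) by (simp add: comp_assoc)
  qed
  then have "max_num_cycles n v + 1 \<le> max_num_cycles n (t \<circ> v)"
    using split w(2) unfolding max_num_cycles_def by auto
  with max_num_cycles_T_alt_comp(2)[OF v t] show ?thesis using t by force
qed

lemma foldr_T_alt_permutes: "set ts \<subseteq> T_alt n \<Longrightarrow> foldr (\<circ>) ts id permutes {1..n}"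
proof (induction ts)
  case (Cons t ts)
  then have t: "t \<in> T_alt n" and ts: "set ts \<subseteq> T_alt n" by auto
  have "foldr (\<circ>) (t # ts) id = t \<circ> foldr (\<circ>) ts id" by simp
  then show ?case using permutes_compose[OF Cons.IH[OF ts] T_alt_permutes[OF t]] by (simp only:)
qed (simp add: permutes_id)

lemma max_num_cycles_foldr_T_alt:
  "set ts \<subseteq> T_alt n \<Longrightarrow> n \<le> max_num_cycles n (foldr (\<circ>) ts id) + length ts"
proof (induction ts)
  case Nil
  then show ?case using max_num_cycles_id[of n] by (simp add: id_def)
next
  case (Cons t ts)
  then have t: "t \<in> T_alt n" and ts: "set ts \<subseteq> T_alt n" by auto
  have "max_num_cycles n (foldr (\<circ>) ts id) \<le> max_num_cycles n (t \<circ> foldr (\<circ>) ts id) + 1"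
    using max_num_cycles_T_alt_comp(1)[OF foldr_T_alt_permutes[OF ts] t] .
  with Cons.IH[OF ts] show ?case unfolding foldr_Cons o_apply list.size by linarith
qed

lemma alt_group_set_T_alt_comp:
  assumes "v \<in> alt_group_set n" "t \<in> T_alt n"
  shows "t \<circ> v \<in> alt_group_set n"
proof -
  have "t permutes {1..n}" "v permutes {1..n}"
    using assms T_alt_permutes unfolding alt_group_set_def by auto
  moreover from this have "permutation t" "permutation v" by (auto simp: permutation_permutes)
  ultimately show ?thesis
    using assms T_alt_evenperm[OF assms(2)] permutes_compose[of v _ t]
    unfolding alt_group_set_def by (simp add: evenperm_comp)
qed

lemma exists_T_alt_word:
  assumes n: "n \<ge> 2"
  shows "v \<in> alt_group_set n \<Longrightarrow>
    \<exists>ts. length ts = n - max_num_cycles n v \<and> set ts \<subseteq> T_alt n \<and> v = foldr (\<circ>) ts id"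
proof (induction "n - max_num_cycles n v" arbitrary: v)
  case 0
  then have "v = id"
    using even_max_num_cycles_eq_n_imp_id[OF n] max_num_cycles_le[of n v]
    unfolding alt_group_set_def by simp
  with 0 show ?case by (intro exI[of _ "[]"]) simp
next
  case (Suc m)
  then have v: "v permutes {1..n}" unfolding alt_group_set_def by simp
  moreover have "max_num_cycles n v < n" using Suc.hyps(2) by simp
  ultimately obtain t where t: "t \<in> T_alt n" "max_num_cycles n (t \<circ> v) = max_num_cycles n v + 1"
    using exists_T_alt_max_num_cycles_Suc[OF n] by blast
  obtain t' where t': "t' \<in> T_alt n" "t' \<circ> t = id" using t(1) by (rule T_alt_inverse)
  have "m = n - max_num_cycles n (t \<circ> v)" using Suc.hyps(2) t(2) by simp
  moreover have "t \<circ> v \<in> alt_group_set n" using Suc.prems t(1) by (rule alt_group_set_T_alt_comp)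
  ultimately obtain ts where ts: "length ts = m" "set ts \<subseteq> T_alt n" "t \<circ> v = foldr (\<circ>) ts id"
    using Suc.hyps(1) by blast
  have "v = (t' \<circ> t) \<circ> v" using t'(2) by simp
  also have "\<dots> = foldr (\<circ>) (t' # ts) id" using ts(3) by (simp add: comp_assoc)
  finally have "v = foldr (\<circ>) (t' # ts) id" .
  with ts t' Suc.hyps(2) show ?case by (intro exI[of _ "t' # ts"]) simp
qed

lemma len_T_eq:
  assumes "n \<ge> 2" and "v \<in> alt_group_set n"
  shows "len_T n v = n - max_num_cycles n v"
  unfolding len_T_def
proof (rule Least_equality)
  show "\<exists>ts. length ts = n - max_num_cycles n v \<and> set ts \<subseteq> T_alt n \<and> v = foldr (\<circ>) ts id"
    using exists_T_alt_word assms .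
  fix r assume "\<exists>ts. length ts = r \<and> set ts \<subseteq> T_alt n \<and> v = foldr (\<circ>) ts id"
  then show "n - max_num_cycles n v \<le> r" using max_num_cycles_foldr_T_alt by fastforce
qed

lemma card_transversals_of_involution_eq:
  assumes "\<And>x. x \<in> X \<Longrightarrow> f x \<in> X" and "\<And>x. x \<in> X \<Longrightarrow> f (f x) = x"
    and "\<And>x. x \<in> X \<Longrightarrow> P (f x) \<longleftrightarrow> \<not> P x" and "\<And>x. x \<in> X \<Longrightarrow> Q (f x) \<longleftrightarrow> \<not> Q x"
  shows "card {x \<in> X. P x} = card {x \<in> X. Q x}"
proof (rule bij_betw_same_card)
  show "bij_betw (\<lambda>x. if Q x then x else f x) {x \<in> X. P x} {x \<in> X. Q x}"
    by (rule bij_betw_byWitness[where f' = "\<lambda>x. if P x then x else f x"]) (use assms in auto)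
qed

theorem theorem9p2:
  fixes n k :: nat
  assumes "n \<ge> 2" and "k \<le> n - 2"
  shows "a_count n k = stirling1_2 n (n - k)"
proof -
  define X where "X = {p. p permutes {1..n} \<and> max_num_cycles n p = n - k}"
  have "a_count n k = card {p \<in> X. evenperm p}"
    unfolding a_count_def X_def
    using len_T_eq[OF assms(1)] max_num_cycles_le[of n] assms(2)
    by (intro arg_cong[where f = card]) (auto simp: alt_group_set_def)
  also have "\<dots> = card {p \<in> X. 2 \<notin> cycle_of p 1}"
  proof (rule card_transversals_of_involution_eq[where f = "(\<circ>) (transpose 1 2)"])
    fix p assume "p \<in> X"
    then have p: "p permutes {1..n}" unfolding X_def by simp
    then have "permutation p" using finite_atLeastAtMost permutation_permutes by blast
    show "transpose 1 2 \<circ> p \<in> X" using \<open>p \<in> X\<close> unfolding X_def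
      using permutes_compose[OF p transpose_12_permutes[OF assms(1)]]
        max_num_cycles_transpose_12_comp[of n p] by simp
    show "transpose 1 2 \<circ> (transpose 1 2 \<circ> p) = p" by simp
    show "evenperm (transpose 1 2 \<circ> p) \<longleftrightarrow> \<not> evenperm p"
      using \<open>permutation p\<close> by (simp add: evenperm_comp evenperm_swap permutation_swap_id)
    show "2 \<notin> cycle_of (transpose 1 2 \<circ> p) 1 \<longleftrightarrow> \<not> 2 \<notin> cycle_of p 1"
      using cycle_of_transpose_comp_iff[OF \<open>permutation p\<close>, of 1 2] by simp
  qed
  also have "\<dots> = stirling1_2 n (n - k)"
    unfolding stirling1_2_def X_def
  proof (intro arg_cong[where f = card] Collect_cong)
    fix p :: "nat \<Rightarrow> nat"
    show "p \<in> {p. p permutes {1..n} \<and> max_num_cycles n p = n - k} \<and> 2 \<notin> cycle_of p 1 \<longleftrightarrow>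
      p permutes {1..n} \<and> num_cycles n p = n - k \<and> cycle_of p 1 \<noteq> cycle_of p 2"
    proof (cases "p permutes {1..n}")
      case True
      then have "cycle_of p 1 = cycle_of p 2 \<longleftrightarrow> 2 \<in> cycle_of p 1"
        using cycle_of_eq_iff finite_atLeastAtMost permutation_permutes by blast
      with max_num_cycles_separated[OF assms(1) True] show ?thesis by auto
    qed simp
  qed
  finally show ?thesis .
qed

end
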